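(* Let $n\ge 2$ and let $X_{1},\dots,X_{n}\in[0,1]$ be IID real random variables with common law $F$, and let $X\sim F$. Then for every $\delta\in(0,1)$, each of the following two inequalities holds with probability at least $1-\delta$: \[ \sqrt{S_{n}^{2}}\le\sqrt{\mathbb{V}_{F}X}+\left(\frac{\sqrt{2}}{2}+\frac{\sqrt{6}}{6}\right)\sqrt{\frac{1}{\lfloor n/2\rfloor}\log\frac{1}{\delta}}, \] \[ \sqrt{\mathbb{V}_{F}X}\le\sqrt{S_{n}^{2}}+\left(\frac{\sqrt{2}}{2}+\frac{\sqrt{42}}{6}\right)\sqrt{\frac{1}{\lfloor n/2\rfloor}\log\frac{1}{\delta}}. \]
   Context: $\bar X_n=n^{-1}\sum_{i=1}^n X_i$ and $S_{n}^{2}=(n-1)^{-1}\sum_{i=1}^{n}(X_{i}-\bar{X}_{n})^{2}$ is the unbiased sample variance. $\mathbb{V}_F X$ denotes the variance of $X\sim F$. $\lfloor\cdot\rfloor$ is the floor function. *)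

theory Defs
  imports "HOL-Probability.Probability"
begin

definition sample_mean :: "nat \<Rightarrow> (nat \<Rightarrow> 'a \<Rightarrow> real) \<Rightarrow> 'a \<Rightarrow> real" where
  "sample_mean n X w = (\<Sum>i<n. X i w) / real n"

definition sample_var :: "nat \<Rightarrow> (nat \<Rightarrow> 'a \<Rightarrow> real) \<Rightarrow> 'a \<Rightarrow> real" where
  "sample_var n X w = (\<Sum>i<n. (X i w - sample_mean n X w)\<^sup>2) / (real n - 1)"

definition law_variance :: "real measure \<Rightarrow> real" where
  "law_variance F = (\<integral>x. (x - (\<integral>y. y \<partial>F))\<^sup>2 \<partial>F)"

end

theory Submission
  imports Defs "HOL-Number_Theory.Cong"
begin

text \<open>The unbiased sample variance is the U-statistic of the kernel \<open>(x - y)\<^sup>2 / 2\<close>, whose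
  mean is the variance \<open>V\<close>. Splitting the \<open>n (n - 1) / 2\<close> pairs of indices into the rounds of a
  round-robin tournament, each consisting of \<open>m = \<lfloor>n/2\<rfloor>\<close> disjoint pairs, writes \<open>S\<^sub>n\<^sup>2\<close> as an
  average of round means, each an average of \<open>m\<close> independent kernel values in \<open>[0, 1/2]\<close>.
  Jensen's inequality and the convexity of \<open>exp\<close> on \<open>[0, 1/2]\<close> then give the Poisson-type bound
  \<open>E exp (t S\<^sub>n\<^sup>2) \<le> exp (2 m V (exp (t / 2m) - 1))\<close>, and Chernoff's method turns it into
  deviation bounds for \<open>\<surd>S\<^sub>n\<^sup>2\<close> around \<open>\<surd>V\<close> of size \<open>\<surd>(ln (1/\<delta>) / m)\<close> in either direction.\<close>

section \<open>Round-robin tournaments\<close>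

definition circ_add :: "nat \<Rightarrow> nat \<Rightarrow> nat \<Rightarrow> nat" where
  "circ_add N r d = (r + d) mod N"

lemma circ_add_less: "0 < N \<Longrightarrow> circ_add N r d < N"
  unfolding circ_add_def by simp

lemma circ_add_cancel_left [simp]:
  assumes "x < N" "y < N"
  shows "circ_add N r x = circ_add N r y \<longleftrightarrow> x = y"
proof
  assume "circ_add N r x = circ_add N r y"
  then have "[x = y] (mod N)" by (simp add: circ_add_def cong_def[symmetric] cong_add_lcancel_nat)
  then show "x = y" using assms cong_less_modulus_unique_nat by blast
qed simp

lemma circ_add_eq_self_iff [simp]:
  assumes "r < N" "x < N"
  shows "circ_add N r x = r \<longleftrightarrow> x = 0"
  using circ_add_cancel_left[of x N 0 r] assms by (simp add: circ_add_def)

lemma self_eq_circ_add_iff [simp]: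
  assumes "r < N" "x < N"
  shows "r = circ_add N r x \<longleftrightarrow> x = 0"
  using circ_add_eq_self_iff[OF assms] by auto

lemma circle_pairs_inj_on:
  assumes "odd N"
  shows "inj_on (\<lambda>(r, d). (circ_add N r d, circ_add N r (N - d))) ({..<N} \<times> {..<N})"
proof (rule inj_onI)
  fix p q
  assume "p \<in> {..<N} \<times> {..<N}" "q \<in> {..<N} \<times> {..<N}"
    and "(\<lambda>(r, d). (circ_add N r d, circ_add N r (N - d))) p =
         (\<lambda>(r, d). (circ_add N r d, circ_add N r (N - d))) q"
  moreover obtain r d r' d' where p: "p = (r, d)" and q: "q = (r', d')" by fastforce
  ultimately have r: "r < N" "r' < N" and d: "d < N" "d' < N"
    and e1: "(r + d) mod N = (r' + d') mod N" and e2: "(r + (N - d)) mod N = (r' + (N - d')) mod N"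
    by (auto simp: circ_add_def)
  \<comment> \<open>Adding the two coordinates gives \<open>2 r mod N\<close>, which determines \<open>r\<close> as \<open>N\<close> is odd.\<close>
  have sum_cong: "[(r + d) + (r + (N - d)) = (r' + d') + (r' + (N - d'))] (mod N)"
    using e1 e2 unfolding cong_def by (metis mod_add_eq)
  have "(r + d) + (r + (N - d)) = N + 2 * r" "(r' + d') + (r' + (N - d')) = N + 2 * r'"
    using d by simp_all
  with sum_cong have "[N + 2 * r = N + 2 * r'] (mod N)" by metis
  then have "[2 * r = 2 * r'] (mod N)" by (simp add: cong_add_lcancel_nat)
  moreover have "coprime 2 N" using assms by simp
  ultimately have "[r = r'] (mod N)" using cong_mult_lcancel_nat by blast
  then have "r = r'" using r cong_less_modulus_unique_nat by blast
  moreover from \<open>r = r'\<close> have "d = d'" using e1 d circ_add_cancel_left[of d N d' r]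
    by (simp add: circ_add_def)
  ultimately show "p = q" using p q by simp
qed

lemma sum_symmetric_odd_range:
  fixes f :: "nat \<Rightarrow> 'a::comm_semiring_1"
  assumes sym: "\<And>d. 1 \<le> d \<Longrightarrow> d \<le> 2 * m \<Longrightarrow> f (2 * m + 1 - d) = f d"
  shows "(\<Sum>d\<in>{1..<2 * m + 1}. f d) = 2 * (\<Sum>k<m. f (k + 1))"
proof -
  have lower: "(\<Sum>d\<in>{1..m}. f d) = (\<Sum>k<m. f (k + 1))"
    by (rule sum.reindex_bij_witness[of _ "\<lambda>k. k + 1" "\<lambda>d. d - 1"]) auto
  have upper: "(\<Sum>d\<in>{m + 1..<2 * m + 1}. f d) = (\<Sum>d\<in>{1..m}. f d)"
  proof (rule sum.reindex_bij_witness[of _ "\<lambda>d. 2 * m + 1 - d" "\<lambda>d. 2 * m + 1 - d"])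
    fix d assume d: "d \<in> {m + 1..<2 * m + 1}"
    then have "f (2 * m + 1 - (2 * m + 1 - d)) = f (2 * m + 1 - d)" by (intro sym) auto
    moreover have "2 * m + 1 - (2 * m + 1 - d) = d" using d by auto
    ultimately show "f (2 * m + 1 - d) = f d" by simp
  qed auto
  have split: "{1..<2 * m + 1} = {1..m} \<union> {m + 1..<2 * m + 1}" by auto
  have "(\<Sum>d\<in>{1..<2 * m + 1}. f d) = (\<Sum>d\<in>{1..m}. f d) + (\<Sum>d\<in>{m + 1..<2 * m + 1}. f d)"
    unfolding split by (rule sum.union_disjoint) auto
  then show ?thesis using lower upper by (simp add: mult_2)
qed

lemma circle_pairs_bij_betw:
  assumes "odd N"
  shows "bij_betw (\<lambda>(r, d). (circ_add N r d, circ_add N r (N - d)))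
    ({..<N} \<times> {1..<N}) (Sigma {..<N} (\<lambda>i. {..<N} - {i}))"
proof -
  define \<phi> where "\<phi> = (\<lambda>(r, d). (circ_add N r d, circ_add N r (N - d)))"
  have inj: "inj_on \<phi> ({..<N} \<times> {1..<N})"
    using circle_pairs_inj_on[OF assms] unfolding \<phi>_def by (rule inj_on_subset) auto
  have "\<phi> p \<in> Sigma {..<N} (\<lambda>i. {..<N} - {i})" if "p \<in> {..<N} \<times> {1..<N}" for p
  proof (cases p)
    case (Pair r d)
    with that have "d \<noteq> N - d" using assms by auto presburger
    then show ?thesis using that circ_add_less[of N] Pair unfolding \<phi>_def by auto
  qed
  then have "\<phi> ` ({..<N} \<times> {1..<N}) \<subseteq> Sigma {..<N} (\<lambda>i. {..<N} - {i})" by blast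
  moreover have "card (\<phi> ` ({..<N} \<times> {1..<N})) = card (Sigma {..<N} (\<lambda>i. {..<N} - {i}))"
    using card_image[OF inj] by simp
  ultimately have "\<phi> ` ({..<N} \<times> {1..<N}) = Sigma {..<N} (\<lambda>i. {..<N} - {i})"
    by (intro card_subset_eq) auto
  with inj show ?thesis unfolding \<phi>_def bij_betw_def by blast
qed

lemma sum_offdiag_circle_rounds:
  fixes g :: "nat \<Rightarrow> nat \<Rightarrow> 'a::comm_semiring_1"
  assumes "odd N" and sym: "\<And>i j. g i j = g j i" and diag: "\<And>i. g i i = 0"
  shows "(\<Sum>i<N. \<Sum>j<N. g i j) =
    2 * (\<Sum>r<N. \<Sum>k<(N - 1) div 2. g (circ_add N r (k + 1)) (circ_add N r (N - (k + 1))))"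
proof -
  define m where "m = (N - 1) div 2"
  have N: "N = 2 * m + 1" using \<open>odd N\<close> unfolding m_def by presburger
  have "(\<Sum>i<N. \<Sum>j<N. g i j) = (\<Sum>i<N. \<Sum>j\<in>{..<N} - {i}. g i j)"
  proof (rule sum.cong[OF refl])
    fix i assume "i \<in> {..<N}"
    then show "(\<Sum>j<N. g i j) = (\<Sum>j\<in>{..<N} - {i}. g i j)"
      using sum.remove[of "{..<N}" i "g i"] diag by simp
  qed
  also have "\<dots> = (\<Sum>p\<in>Sigma {..<N} (\<lambda>i. {..<N} - {i}). case_prod g p)"
    by (rule sum.Sigma) auto
  also have "\<dots> = (\<Sum>(r, d)\<in>{..<N} \<times> {1..<N}. g (circ_add N r d) (circ_add N r (N - d)))"
    using sum.reindex_bij_betw[OF circle_pairs_bij_betw[OF \<open>odd N\<close>], of "case_prod g"]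
    by (simp add: case_prod_beta)
  also have "\<dots> = (\<Sum>r<N. \<Sum>d\<in>{1..<N}. g (circ_add N r d) (circ_add N r (N - d)))"
    by (simp add: sum.cartesian_product)
  also have "\<dots> = (\<Sum>r<N. 2 * (\<Sum>k<m. g (circ_add N r (k + 1)) (circ_add N r (N - (k + 1)))))"
  proof (rule sum.cong[OF refl])
    fix r
    show "(\<Sum>d\<in>{1..<N}. g (circ_add N r d) (circ_add N r (N - d))) =
      2 * (\<Sum>k<m. g (circ_add N r (k + 1)) (circ_add N r (N - (k + 1))))"
      unfolding N by (rule sum_symmetric_odd_range) (simp add: sym)
  qed
  finally show ?thesis by (simp add: sum_distrib_left m_def)
qed

text \<open>The circle method: for odd \<open>N\<close>, round \<open>r\<close> pairs \<open>r + d\<close> with \<open>r - d\<close> (mod \<open>N\<close>),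
  and player \<open>r\<close> sits out; for even \<open>n = N + 1\<close> it meets the extra player \<open>N\<close> instead.\<close>

definition rr_rounds :: "nat \<Rightarrow> nat" where
  "rr_rounds n = (if odd n then n else n - 1)"

definition rr_fst :: "nat \<Rightarrow> nat \<Rightarrow> nat \<Rightarrow> nat" where
  "rr_fst n r k = (if k < (rr_rounds n - 1) div 2 then circ_add (rr_rounds n) r (k + 1) else r)"

definition rr_snd :: "nat \<Rightarrow> nat \<Rightarrow> nat \<Rightarrow> nat" where
  "rr_snd n r k =
    (if k < (rr_rounds n - 1) div 2 then circ_add (rr_rounds n) r (rr_rounds n - (k + 1)) else rr_rounds n)"

lemma rr_rounds_cases:
  assumes "n \<ge> 2"
  obtains (odd) m where "n = 2 * m + 1" "rr_rounds n = 2 * m + 1"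
    | (even) m where "n = 2 * m + 2" "rr_rounds n = 2 * m + 1"
proof (cases "odd n")
  case True
  then obtain m where "n = 2 * m + 1" by (meson oddE)
  with True show ?thesis using odd by (simp add: rr_rounds_def)
next
  case False
  with assms have "n = 2 * (n div 2 - 1) + 2" by presburger
  with False show ?thesis using even[of "n div 2 - 1"] by (simp add: rr_rounds_def)
qed

lemma rr_rounds_pos: "n \<ge> 2 \<Longrightarrow> 0 < rr_rounds n"
  by (cases rule: rr_rounds_cases) auto

lemma rr_rounds_mult_pairs: "2 * rr_rounds n * (n div 2) = n * (n - 1)"
  by (cases "odd n") (auto simp: rr_rounds_def elim!: oddE evenE)

lemma rr_pair_valid:
  assumes "n \<ge> 2" "r < rr_rounds n" "k < n div 2"
  shows "rr_fst n r k < n \<and> rr_snd n r k < n \<and> rr_fst n r k \<noteq> rr_snd n r k"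
  using assms(1)
proof (cases rule: rr_rounds_cases)
  case (odd m)
  moreover have "circ_add (2 * m + 1) r d < 2 * m + 1" for d by (simp add: circ_add_less)
  ultimately show ?thesis using assms by (simp add: rr_fst_def rr_snd_def)
next
  case (even m)
  moreover have "circ_add (2 * m + 1) r d < 2 * m + 2" "circ_add (2 * m + 1) r d \<noteq> 2 * m + 1"
    "2 * m + 1 \<noteq> circ_add (2 * m + 1) r d" for d
    using circ_add_less[of "2 * m + 1" r d] by auto
  ultimately show ?thesis using assms by (auto simp: rr_fst_def rr_snd_def)
qed

lemma rr_round_disjoint:
  assumes "n \<ge> 2" "r < rr_rounds n"
  shows "disjoint_family_on (\<lambda>k. {rr_fst n r k, rr_snd n r k}) {..<n div 2}"
  using assms(1)
proof (cases rule: rr_rounds_cases)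
  case (odd m)
  then show ?thesis using assms by (auto simp: disjoint_family_on_def rr_fst_def rr_snd_def)
next
  case (even m)
  moreover have "circ_add (2 * m + 1) r d < 2 * m + 2" "circ_add (2 * m + 1) r d \<noteq> 2 * m + 1"
    "2 * m + 1 \<noteq> circ_add (2 * m + 1) r d" for d
    using circ_add_less[of "2 * m + 1" r d] by auto
  ultimately show ?thesis using assms
    by (auto simp: disjoint_family_on_def rr_fst_def rr_snd_def)
qed

lemma sum_offdiag_round_robin:
  fixes g :: "nat \<Rightarrow> nat \<Rightarrow> 'a::comm_semiring_1"
  assumes "n \<ge> 2" and sym: "\<And>i j. g i j = g j i" and diag: "\<And>i. g i i = 0"
  shows "(\<Sum>i<n. \<Sum>j<n. g i j) = 2 * (\<Sum>r<rr_rounds n. \<Sum>k<n div 2. g (rr_fst n r k) (rr_snd n r k))"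
  using assms(1)
proof (cases rule: rr_rounds_cases)
  case (odd m)
  have "(\<Sum>i<n. \<Sum>j<n. g i j) =
    2 * (\<Sum>r<n. \<Sum>k<m. g (circ_add n r (k + 1)) (circ_add n r (n - (k + 1))))"
    using sum_offdiag_circle_rounds[of n g] odd sym diag by simp
  then show ?thesis using odd by (simp add: rr_fst_def rr_snd_def)
next
  case (even m)
  define N where "N = 2 * m + 1"
  have n: "n = Suc N" using even unfolding N_def by simp
  have "(\<Sum>i<n. \<Sum>j<n. g i j) = (\<Sum>i<N. \<Sum>j<N. g i j) + 2 * (\<Sum>r<N. g r N)"
    unfolding n by (simp add: sum.distrib diag sym[of N] mult_2 add_ac)
  also have "(\<Sum>i<N. \<Sum>j<N. g i j) =
    2 * (\<Sum>r<N. \<Sum>k<m. g (circ_add N r (k + 1)) (circ_add N r (N - (k + 1))))"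
    using sum_offdiag_circle_rounds[of N g] sym diag unfolding N_def by simp
  also have "2 * (\<Sum>r<N. \<Sum>k<m. g (circ_add N r (k + 1)) (circ_add N r (N - (k + 1)))) +
      2 * (\<Sum>r<N. g r N) = 2 * (\<Sum>r<N. \<Sum>k<Suc m. g (rr_fst n r k) (rr_snd n r k))"
    using even by (simp add: rr_fst_def rr_snd_def N_def sum.distrib distrib_left)
  finally show ?thesis using even N_def by simp
qed

section \<open>The variance kernel\<close>

definition var_kernel :: "real \<Rightarrow> real \<Rightarrow> real" where
  "var_kernel x y = (x - y)\<^sup>2 / 2"

lemma var_kernel_commute: "var_kernel x y = var_kernel y x"
  unfolding var_kernel_def by (simp add: power2_commute)

lemma var_kernel_same [simp]: "var_kernel x x = 0"
  unfolding var_kernel_def by simp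

lemma var_kernel_nonneg: "0 \<le> var_kernel x y"
  unfolding var_kernel_def by simp

lemma borel_measurable_var_kernel [measurable]:
  "f \<in> borel_measurable M \<Longrightarrow> g \<in> borel_measurable M \<Longrightarrow> (\<lambda>w. var_kernel (f w) (g w)) \<in> borel_measurable M"
  unfolding var_kernel_def by (intro borel_measurable_divide borel_measurable_power borel_measurable_diff) auto

lemma var_kernel_centered:
  "var_kernel x y = (x - c)\<^sup>2 / 2 + (y - c)\<^sup>2 / 2 - (x - c) * (y - c)"
  unfolding var_kernel_def by (simp add: power2_eq_square field_simps)

lemma var_kernel_le_half:
  assumes "x \<in> {0..1}" "y \<in> {0..1}"
  shows "var_kernel x y \<le> 1 / 2"
proof -
  have "\<bar>x - y\<bar> \<le> 1" using assms by auto
  then have "(x - y)\<^sup>2 \<le> 1" by (metis abs_le_square_iff abs_one one_power2)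
  then show ?thesis unfolding var_kernel_def by simp
qed

lemma sum_var_kernel:
  fixes x :: "nat \<Rightarrow> real"
  assumes "n > 0"
  shows "(\<Sum>i<n. \<Sum>j<n. var_kernel (x i) (x j)) = real n * (\<Sum>i<n. (x i - (\<Sum>j<n. x j) / real n)\<^sup>2)"
proof -
  define a where "a i = x i - (\<Sum>j<n. x j) / real n" for i
  have sum_a: "(\<Sum>i<n. a i) = 0"
    using assms by (simp add: a_def sum_subtractf)
  have "var_kernel (x i) (x j) = (a i)\<^sup>2 / 2 + (a j)\<^sup>2 / 2 - a i * a j" for i j
    unfolding a_def by (rule var_kernel_centered)
  then have "(\<Sum>i<n. \<Sum>j<n. var_kernel (x i) (x j)) =
      real n * (\<Sum>i<n. (a i)\<^sup>2) - (\<Sum>i<n. a i) * (\<Sum>j<n. a j)"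
    by (simp add: sum.distrib sum_subtractf sum_divide_distrib[symmetric] sum_product
        sum_distrib_left[symmetric])
  then show ?thesis using sum_a by (simp add: a_def)
qed

lemma sample_var_round_robin:
  assumes "n \<ge> 2"
  shows "sample_var n X w = (\<Sum>r<rr_rounds n.
      (\<Sum>k<n div 2. var_kernel (X (rr_fst n r k) w) (X (rr_snd n r k) w)) / real (n div 2))
    / real (rr_rounds n)"
proof -
  define T where "T = (\<Sum>r<rr_rounds n. \<Sum>k<n div 2. var_kernel (X (rr_fst n r k) w) (X (rr_snd n r k) w))"
  have count: "2 * real (rr_rounds n) * real (n div 2) = real n * (real n - 1)"
    using rr_rounds_mult_pairs[of n] assms by (metis of_nat_1 of_nat_diff of_nat_mult of_nat_numeral
        le_trans one_le_numeral)
  have "real n * (\<Sum>i<n. (X i w - sample_mean n X w)\<^sup>2) = 2 * T"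
    using sum_var_kernel[of n "\<lambda>i. X i w"] sum_offdiag_round_robin[of n "\<lambda>i j. var_kernel (X i w) (X j w)"]
      assms var_kernel_commute
    by (simp add: sample_mean_def T_def)
  then have "sample_var n X w = 2 * T / (real n * (real n - 1))"
    using assms by (simp add: sample_var_def field_simps)
  also have "\<dots> = T / real (n div 2) / real (rr_rounds n)"
    unfolding count[symmetric] by simp
  finally show ?thesis by (simp add: T_def sum_divide_distrib)
qed

section \<open>Exponential inequalities\<close>

lemma exp_le_chord:
  fixes t y c :: real
  assumes "0 \<le> y" "y \<le> c" "0 < c"
  shows "exp (t * y) \<le> 1 + y / c * (exp (t * c) - 1)"
proof -
  have "exp ((1 - y / c) *\<^sub>R 0 + (y / c) *\<^sub>R (t * c)) \<le> (1 - y / c) * exp 0 + (y / c) * exp (t * c)"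
    by (rule convex_onD[OF exp_convex]) (use assms in auto)
  moreover have "(1 - y / c) *\<^sub>R 0 + (y / c) *\<^sub>R (t * c) = t * y" using assms by simp
  ultimately show ?thesis by (simp add: algebra_simps)
qed

lemma exp_minus_le_quadratic:
  fixes u :: real
  assumes "0 \<le> u"
  shows "exp (- u) \<le> 1 - u + u\<^sup>2 / 2"
proof -
  have pos: "0 < 1 + u + u\<^sup>2 / 2" using assms by (simp add: add_pos_nonneg)
  have "(1 + u + u\<^sup>2 / 2) * (1 - u + u\<^sup>2 / 2) = 1 + u ^ 4 / 4"
    by (simp add: power2_eq_square power4_eq_xxxx algebra_simps)
  then have "1 / (1 + u + u\<^sup>2 / 2) \<le> 1 - u + u\<^sup>2 / 2"
    using pos by (simp add: divide_le_eq mult.commute)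
  moreover have "exp (- u) \<le> 1 / (1 + u + u\<^sup>2 / 2)"
    unfolding exp_minus inverse_eq_divide
    by (rule divide_left_mono) (use exp_lower_Taylor_quadratic[OF assms] pos in auto)
  ultimately show ?thesis by linarith
qed

lemma upper_tail_exponent_le:
  fixes s e :: real
  assumes "0 \<le> s" "0 \<le> e"
  shows "2 * s\<^sup>2 * (exp (e / (2 * (s + e))) - 1) \<le> s * e"
proof (cases "s = 0 \<or> e = 0")
  case False
  define D where "D = s + e"
  have se: "0 < s" "0 < e" and D: "0 < D" using assms False unfolding D_def by auto
  have "e / (2 * D) \<le> 1" using se D unfolding D_def by (simp add: field_simps)
  with se D have "2 * s\<^sup>2 * (exp (e / (2 * D)) - 1) \<le> 2 * s\<^sup>2 * (e / (2 * D) + (e / (2 * D))\<^sup>2)"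
    using exp_bound[of "e / (2 * D)"] by (intro mult_left_mono) auto
  also have "\<dots> = s * e * (s * (2 * D + e) / (2 * D\<^sup>2))"
    using D by (simp add: field_simps power2_eq_square)
  also have "\<dots> \<le> s * e * 1"
  proof (intro mult_left_mono)
    have "s * (2 * D + e) \<le> 2 * D\<^sup>2"
      unfolding D_def using se by (simp add: power2_eq_square algebra_simps)
    then show "s * (2 * D + e) / (2 * D\<^sup>2) \<le> 1" using D by simp
  qed (use se in auto)
  finally show ?thesis unfolding D_def by simp
qed auto

lemma lower_tail_exponent_le:
  fixes s e :: real
  assumes "0 \<le> e" "e \<le> s" "0 < s"
  shows "2 * (e / s) * (s - e)\<^sup>2 + 2 * s\<^sup>2 * (exp (- (e / s)) - 1) \<le> - e\<^sup>2"
proof -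
  have "2 * s\<^sup>2 * (exp (- (e / s)) - 1) \<le> 2 * s\<^sup>2 * (- (e / s) + (e / s)\<^sup>2 / 2)"
    using exp_minus_le_quadratic[of "e / s"] assms by (intro mult_left_mono) auto
  moreover have "2 * (e / s) * (s - e)\<^sup>2 + 2 * s\<^sup>2 * (- (e / s) + (e / s)\<^sup>2 / 2) =
      - e\<^sup>2 - 2 * e\<^sup>2 * (s - e) / s"
    using assms by (simp add: field_simps power2_eq_square)
  moreover have "0 \<le> 2 * e\<^sup>2 * (s - e) / s" using assms by simp
  ultimately show ?thesis by linarith
qed

lemma exp_mean_le_mean_exp:
  fixes x :: "'i \<Rightarrow> real"
  assumes "finite I" "I \<noteq> {}"
  shows "exp ((\<Sum>i\<in>I. x i) / card I) \<le> (\<Sum>i\<in>I. exp (x i)) / card I"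
proof -
  have "exp (\<Sum>i\<in>I. (1 / card I) *\<^sub>R x i) \<le> (\<Sum>i\<in>I. (1 / card I) * exp (x i))"
    using assms by (intro convex_on_sum[OF _ _ exp_convex]) auto
  then show ?thesis by (simp add: sum_distrib_left[symmetric] sum_divide_distrib[symmetric])
qed

section \<open>Chernoff bounds for square roots\<close>

lemma (in prob_space) integrable_bounded:
  fixes f :: "'a \<Rightarrow> real"
  assumes "f \<in> borel_measurable M" "\<And>w. w \<in> space M \<Longrightarrow> \<bar>f w\<bar> \<le> B"
  shows "integrable M f"
  using assms by (intro integrable_const_bound[where B = B] AE_I2) auto

lemma (in prob_space) integrable_exp_mult_bounded:
  fixes Y :: "'a \<Rightarrow> real"
  assumes "Y \<in> borel_measurable M" "\<And>w. w \<in> space M \<Longrightarrow> 0 \<le> Y w \<and> Y w \<le> c"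
  shows "integrable M (\<lambda>w. exp (t * Y w))"
proof (rule integrable_bounded)
  fix w assume "w \<in> space M"
  then have Y: "0 \<le> Y w" "Y w \<le> c" using assms(2) by auto
  have "t * Y w \<le> \<bar>t\<bar> * Y w" using Y by (intro mult_right_mono) auto
  also have "\<dots> \<le> \<bar>t\<bar> * c" using Y by (intro mult_left_mono) auto
  finally show "\<bar>exp (t * Y w)\<bar> \<le> exp (\<bar>t\<bar> * c)" by simp
qed (use assms(1) in simp)

lemma (in prob_space) expectation_exp_le_bounded:
  fixes Y :: "'a \<Rightarrow> real"
  assumes Y: "Y \<in> borel_measurable M" "\<And>w. w \<in> space M \<Longrightarrow> 0 \<le> Y w \<and> Y w \<le> c" and "0 < c"
  shows "expectation (\<lambda>w. exp (t * Y w)) \<le> exp (expectation Y / c * (exp (t * c) - 1))"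
proof -
  have int: "integrable M Y" using Y by (intro integrable_bounded[where B = c]) auto
  have "expectation (\<lambda>w. exp (t * Y w)) \<le> expectation (\<lambda>w. 1 + Y w / c * (exp (t * c) - 1))"
    using Y \<open>0 < c\<close> int by (intro integral_mono integrable_exp_mult_bounded exp_le_chord) auto
  also have "\<dots> = 1 + expectation Y / c * (exp (t * c) - 1)"
    using int by (simp add: prob_space)
  also have "\<dots> \<le> exp (expectation Y / c * (exp (t * c) - 1))"
    by (rule exp_ge_add_one_self)
  finally show ?thesis .
qed

lemma (in prob_space) Chernoff_ge_expectation:
  fixes Z :: "'a \<Rightarrow> real"
  assumes "0 < t" "integrable M (\<lambda>w. exp (t * Z w))"
  shows "prob {w \<in> space M. a \<le> Z w} \<le> exp (- t * a) * expectation (\<lambda>w. exp (t * Z w))"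
  using Chernoff_ineq_ge[where f = Z and a = a, OF assms(1) _ sets.top]
    integrable_mult_indicator[OF sets.top assms(2)] set_integral_space[OF assms(2)]
  unfolding set_integrable_def by simp

lemma (in prob_space) Chernoff_le_expectation:
  fixes Z :: "'a \<Rightarrow> real"
  assumes "0 < t" "integrable M (\<lambda>w. exp (- t * Z w))"
  shows "prob {w \<in> space M. Z w \<le> a} \<le> exp (t * a) * expectation (\<lambda>w. exp (- t * Z w))"
  using Chernoff_ineq_le[where f = Z and a = a, OF assms(1) _ sets.top]
    integrable_mult_indicator[OF sets.top assms(2)] set_integral_space[OF assms(2)]
  unfolding set_integrable_def by simp

lemma (in prob_space) upper_tail_of_mgf_le:
  fixes Z :: "'a \<Rightarrow> real" and m s e :: real
  assumes int: "\<And>t. integrable M (\<lambda>w. exp (t * Z w))"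
    and mgf: "\<And>t. expectation (\<lambda>w. exp (t * Z w)) \<le> exp (2 * m * s\<^sup>2 * (exp (t / (2 * m)) - 1))"
    and "0 < m" "0 \<le> s" "0 < e"
  shows "prob {w \<in> space M. (s + e)\<^sup>2 \<le> Z w} \<le> exp (- m * e\<^sup>2)"
proof -
  define D where "D = s + e"
  \<comment> \<open>A near-optimal Chernoff parameter for this exponent.\<close>
  define lam where "lam = m * e / D"
  have D: "0 < D" using assms unfolding D_def by simp
  have lam: "0 < lam" using assms D unfolding lam_def by simp
  have "prob {w \<in> space M. D\<^sup>2 \<le> Z w} \<le> exp (- lam * D\<^sup>2) * expectation (\<lambda>w. exp (lam * Z w))"
    by (rule Chernoff_ge_expectation[OF lam int])
  also have "\<dots> \<le> exp (- lam * D\<^sup>2) * exp (2 * m * s\<^sup>2 * (exp (lam / (2 * m)) - 1))"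
    using mgf by (intro mult_left_mono) auto
  also have "\<dots> = exp (m * (2 * s\<^sup>2 * (exp (e / (2 * D)) - 1)) - m * e * D)"
  proof -
    have "lam / (2 * m) = e / (2 * D)" "lam * D\<^sup>2 = m * e * D"
      using D \<open>0 < m\<close> unfolding lam_def by (simp_all add: power2_eq_square)
    then show ?thesis by (simp add: mult_exp_exp algebra_simps)
  qed
  also have "\<dots> \<le> exp (m * (s * e) - m * e * D)"
    using upper_tail_exponent_le[of s e] assms unfolding D_def by (simp add: mult_left_mono)
  also have "\<dots> = exp (- m * e\<^sup>2)"
    unfolding D_def by (simp add: algebra_simps power2_eq_square)
  finally show ?thesis unfolding D_def .
qed

lemma (in prob_space) lower_tail_of_mgf_le:
  fixes Z :: "'a \<Rightarrow> real" and m s e :: real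
  assumes int: "\<And>t. integrable M (\<lambda>w. exp (t * Z w))"
    and mgf: "\<And>t. expectation (\<lambda>w. exp (t * Z w)) \<le> exp (2 * m * s\<^sup>2 * (exp (t / (2 * m)) - 1))"
    and "0 < m" "0 < e" "e < s"
  shows "prob {w \<in> space M. Z w \<le> (s - e)\<^sup>2} \<le> exp (- m * e\<^sup>2)"
proof -
  define lam where "lam = 2 * m * e / s"
  have lam: "0 < lam" using assms unfolding lam_def by simp
  have "prob {w \<in> space M. Z w \<le> (s - e)\<^sup>2} \<le> exp (lam * (s - e)\<^sup>2) * expectation (\<lambda>w. exp (- lam * Z w))"
    by (rule Chernoff_le_expectation[OF lam int])
  also have "\<dots> \<le> exp (lam * (s - e)\<^sup>2) * exp (2 * m * s\<^sup>2 * (exp (- lam / (2 * m)) - 1))"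
    using mgf[of "- lam"] by (intro mult_left_mono) auto
  also have "\<dots> = exp (m * (2 * (e / s) * (s - e)\<^sup>2 + 2 * s\<^sup>2 * (exp (- (e / s)) - 1)))"
  proof -
    have "- lam / (2 * m) = - (e / s)" using \<open>0 < m\<close> unfolding lam_def by simp
    then show ?thesis unfolding lam_def by (simp add: mult_exp_exp algebra_simps)
  qed
  also have "\<dots> \<le> exp (- m * e\<^sup>2)"
    using mult_left_mono[OF lower_tail_exponent_le[of e s], of m] assms by simp
  finally show ?thesis .
qed

lemma (in prob_space) sqrt_upper_tail_le:
  fixes Z :: "'a \<Rightarrow> real" and m V \<delta> :: real
  assumes [measurable]: "Z \<in> borel_measurable M"
    and int: "\<And>t. integrable M (\<lambda>w. exp (t * Z w))"
    and mgf: "\<And>t. expectation (\<lambda>w. exp (t * Z w)) \<le> exp (2 * m * V * (exp (t / (2 * m)) - 1))"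
    and "0 < m" "0 \<le> V" "0 < \<delta>" "\<delta> < 1"
  shows "prob {w \<in> space M. sqrt V + sqrt (ln (1 / \<delta>) / m) < sqrt (Z w)} \<le> \<delta>"
proof -
  define s e where "s = sqrt V" and "e = sqrt (ln (1 / \<delta>) / m)"
  have s: "0 \<le> s" and e: "0 < e" using assms unfolding s_def e_def by auto
  have V: "V = s\<^sup>2" and L: "ln (1 / \<delta>) = m * e\<^sup>2" using assms unfolding s_def e_def by auto
  have "{w \<in> space M. s + e < sqrt (Z w)} \<subseteq> {w \<in> space M. (s + e)\<^sup>2 \<le> Z w}"
  proof safe
    fix w assume lt: "s + e < sqrt (Z w)"
    then have "0 < sqrt (Z w)" using s e by linarith
    then have "0 < Z w" by simp
    moreover have "(s + e)\<^sup>2 \<le> (sqrt (Z w))\<^sup>2" using lt s e by (intro power_mono) auto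
    ultimately show "(s + e)\<^sup>2 \<le> Z w" by simp
  qed
  then have "prob {w \<in> space M. s + e < sqrt (Z w)} \<le> prob {w \<in> space M. (s + e)\<^sup>2 \<le> Z w}"
    by (intro finite_measure_mono) auto
  also have "\<dots> \<le> exp (- ln (1 / \<delta>))"
    using upper_tail_of_mgf_le[OF int _ \<open>0 < m\<close> s e] mgf unfolding V L by simp
  also have "\<dots> = \<delta>" using \<open>0 < \<delta>\<close> by (simp add: ln_div)
  finally show ?thesis unfolding s_def e_def .
qed

lemma (in prob_space) sqrt_lower_tail_le:
  fixes Z :: "'a \<Rightarrow> real" and m V \<delta> :: real
  assumes [measurable]: "Z \<in> borel_measurable M"
    and nonneg: "\<And>w. w \<in> space M \<Longrightarrow> 0 \<le> Z w"
    and int: "\<And>t. integrable M (\<lambda>w. exp (t * Z w))"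
    and mgf: "\<And>t. expectation (\<lambda>w. exp (t * Z w)) \<le> exp (2 * m * V * (exp (t / (2 * m)) - 1))"
    and "0 < m" "0 \<le> V" "0 < \<delta>" "\<delta> < 1"
  shows "prob {w \<in> space M. sqrt (Z w) + sqrt (ln (1 / \<delta>) / m) < sqrt V} \<le> \<delta>"
proof -
  define s e where "s = sqrt V" and "e = sqrt (ln (1 / \<delta>) / m)"
  have e: "0 < e" using assms unfolding e_def by auto
  have V: "V = s\<^sup>2" and L: "ln (1 / \<delta>) = m * e\<^sup>2" using assms unfolding s_def e_def by auto
  have "prob {w \<in> space M. sqrt (Z w) + e < s} \<le> \<delta>"
  proof (cases "e < s")
    case False
    have "s \<le> sqrt (Z w) + e" if "w \<in> space M" for w
      using nonneg[OF that] False by (simp add: add_increasing)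
    then have "{w \<in> space M. sqrt (Z w) + e < s} = {}" by force
    then show ?thesis using \<open>0 < \<delta>\<close> by (simp only: measure_empty)
  next
    case True
    have "{w \<in> space M. sqrt (Z w) + e < s} \<subseteq> {w \<in> space M. Z w \<le> (s - e)\<^sup>2}"
    proof safe
      fix w assume "w \<in> space M" and lt: "sqrt (Z w) + e < s"
      then have "(sqrt (Z w))\<^sup>2 \<le> (s - e)\<^sup>2" using nonneg by (intro power_mono) auto
      then show "Z w \<le> (s - e)\<^sup>2" using nonneg \<open>w \<in> space M\<close> by simp
    qed
    then have "prob {w \<in> space M. sqrt (Z w) + e < s} \<le> prob {w \<in> space M. Z w \<le> (s - e)\<^sup>2}"
      by (intro finite_measure_mono) auto
    also have "\<dots> \<le> exp (- ln (1 / \<delta>))"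
      using lower_tail_of_mgf_le[OF int _ \<open>0 < m\<close> e True] mgf unfolding V L by simp
    also have "\<dots> = \<delta>" using \<open>0 < \<delta>\<close> by (simp add: ln_div)
    finally show ?thesis .
  qed
  then show ?thesis unfolding s_def e_def .
qed

section \<open>Samples in the unit interval\<close>

locale iid_unit_sample = prob_space M for M :: "'a measure" +
  fixes X :: "nat \<Rightarrow> 'a \<Rightarrow> real" and n :: nat and F :: "real measure"
  assumes two_le_n: "2 \<le> n"
    and measurable_X [measurable]: "\<And>i. i < n \<Longrightarrow> X i \<in> borel_measurable M"
    and indep_X: "indep_vars (\<lambda>_. borel) X {..<n}"
    and distr_X: "\<And>i. i < n \<Longrightarrow> distr M borel (X i) = F"
    and X_unit: "\<And>i w. i < n \<Longrightarrow> w \<in> space M \<Longrightarrow> X i w \<in> {0..1}"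
begin

lemma expectation_X_comp:
  fixes f :: "real \<Rightarrow> real"
  assumes "i < n" "f \<in> borel_measurable borel"
  shows "expectation (\<lambda>w. f (X i w)) = (\<integral>x. f x \<partial>F)"
  using integral_distr[of "X i" M borel f] assms distr_X[of i] by simp

lemma expectation_var_kernel:
  assumes "a < n" "b < n" "a \<noteq> b"
  shows "expectation (\<lambda>w. var_kernel (X a w) (X b w)) = law_variance F"
proof -
  define \<mu> where "\<mu> = (\<integral>x. x \<partial>F)"
  define Y where "Y i w = X i w - \<mu>" for i w
  have Y_bound: "\<bar>Y i w\<bar> \<le> 1 + \<bar>\<mu>\<bar>" if "i < n" "w \<in> space M" for i w
    using X_unit[OF that] unfolding Y_def by auto
  have measurable_Y [measurable]: "Y i \<in> borel_measurable M" if "i < n" for i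
    using that unfolding Y_def by measurable
  have int_Y: "integrable M (Y i)" if "i < n" for i
    using that Y_bound by (intro integrable_bounded[where B = "1 + \<bar>\<mu>\<bar>"]) auto
  have int_Y2: "integrable M (\<lambda>w. (Y i w)\<^sup>2)" if "i < n" for i
  proof (rule integrable_bounded[where B = "(1 + \<bar>\<mu>\<bar>)\<^sup>2"])
    show "(\<lambda>w. (Y i w)\<^sup>2) \<in> borel_measurable M" using that by measurable
    fix w assume "w \<in> space M"
    then have "\<bar>Y i w\<bar>\<^sup>2 \<le> (1 + \<bar>\<mu>\<bar>)\<^sup>2" using Y_bound[OF that] by (intro power_mono) auto
    then show "\<bar>(Y i w)\<^sup>2\<bar> \<le> (1 + \<bar>\<mu>\<bar>)\<^sup>2" by simp
  qed
  have mean_Y: "expectation (Y i) = 0" if "i < n" for i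
  proof -
    have "integrable M (X i)"
      using that X_unit by (intro integrable_bounded[where B = 1]) auto
    then show ?thesis using expectation_X_comp[of i "\<lambda>x. x"] that
      unfolding Y_def \<mu>_def by (simp add: prob_space)
  qed
  have var_Y: "expectation (\<lambda>w. (Y i w)\<^sup>2) = law_variance F" if "i < n" for i
    using expectation_X_comp[of i "\<lambda>x. (x - \<mu>)\<^sup>2"] that
    unfolding Y_def law_variance_def \<mu>_def by simp
  have indep_Y: "indep_vars (\<lambda>_. borel) Y {a, b}"
    unfolding Y_def using assms
    by (intro indep_vars_compose2[where X = X, OF indep_vars_subset[OF indep_X]]) auto
  have cross: "expectation (\<lambda>w. Y a w * Y b w) = 0"
    and int_cross: "integrable M (\<lambda>w. Y a w * Y b w)"
    using indep_vars_lebesgue_integral[OF _ indep_Y] indep_vars_integrable[OF _ indep_Y]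
      int_Y mean_Y assms by auto
  have "var_kernel (X a w) (X b w) = (Y a w)\<^sup>2 / 2 + (Y b w)\<^sup>2 / 2 - Y a w * Y b w" for w
    unfolding Y_def by (rule var_kernel_centered)
  then show ?thesis
    using int_Y2 var_Y cross int_cross assms by simp
qed

lemma mgf_var_kernel_le:
  assumes "a < n" "b < n" "a \<noteq> b"
  shows "expectation (\<lambda>w. exp (t * var_kernel (X a w) (X b w))) \<le> exp (2 * law_variance F * (exp (t / 2) - 1))"
  using expectation_exp_le_bounded[of "\<lambda>w. var_kernel (X a w) (X b w)" "1 / 2" t]
    expectation_var_kernel[OF assms] assms X_unit var_kernel_nonneg var_kernel_le_half
  by (simp add: field_simps)

lemma mgf_disjoint_pairs_le:
  fixes a b :: "nat \<Rightarrow> nat"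
  assumes ab: "\<And>k. k < m \<Longrightarrow> a k < n \<and> b k < n \<and> a k \<noteq> b k"
    and disj: "disjoint_family_on (\<lambda>k. {a k, b k}) {..<m}"
  shows "expectation (\<lambda>w. exp (t * (\<Sum>k<m. var_kernel (X (a k) w) (X (b k) w))))
    \<le> exp (2 * real m * law_variance F * (exp (t / 2) - 1))"
proof -
  define Z where "Z k w = exp (t * var_kernel (X (a k) w) (X (b k) w))" for k w
  define K where "K k = {a k, b k}" for k
  define g where "g k f = exp (t * var_kernel (f (a k)) (f (b k)))" for k and f :: "nat \<Rightarrow> real"
  have "indep_vars (\<lambda>k. PiM (K k) (\<lambda>_. borel)) (\<lambda>k w. restrict (\<lambda>i. X i w) (K k)) {..<m}"
    using ab disj unfolding K_def by (intro indep_vars_restrict[OF indep_X]) auto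
  moreover have "g k \<in> borel_measurable (PiM (K k) (\<lambda>_. borel))" for k
  proof -
    have [measurable]: "(\<lambda>f. f (a k)) \<in> borel_measurable (PiM (K k) (\<lambda>_. borel))"
      "(\<lambda>f. f (b k)) \<in> borel_measurable (PiM (K k) (\<lambda>_. borel))"
      unfolding K_def by (auto intro: measurable_component_singleton)
    show ?thesis unfolding g_def by measurable
  qed
  ultimately have "indep_vars (\<lambda>_. borel) (\<lambda>k w. g k (restrict (\<lambda>i. X i w) (K k))) {..<m}"
    by (rule indep_vars_compose2)
  moreover have "(\<lambda>k w. g k (restrict (\<lambda>i. X i w) (K k))) = Z"
    by (simp add: g_def K_def Z_def fun_eq_iff)
  ultimately have indep_Z: "indep_vars (\<lambda>_. borel) Z {..<m}" by simp
  have int_Z: "integrable M (Z k)" if "k < m" for k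
    using ab[OF that] X_unit var_kernel_nonneg var_kernel_le_half unfolding Z_def
    by (intro integrable_exp_mult_bounded[where c = "1 / 2"]) auto
  have "expectation (\<lambda>w. exp (t * (\<Sum>k<m. var_kernel (X (a k) w) (X (b k) w)))) =
      expectation (\<lambda>w. \<Prod>k<m. Z k w)"
    by (simp add: Z_def sum_distrib_left exp_sum)
  also have "\<dots> = (\<Prod>k<m. expectation (Z k))"
    using indep_Z int_Z by (intro indep_vars_lebesgue_integral) auto
  also have "\<dots> \<le> (\<Prod>k<m. exp (2 * law_variance F * (exp (t / 2) - 1)))"
    using mgf_var_kernel_le ab unfolding Z_def by (intro prod_mono) auto
  also have "\<dots> = exp (2 * real m * law_variance F * (exp (t / 2) - 1))"
    by (simp add: exp_of_nat_mult[symmetric] mult_ac)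
  finally show ?thesis .
qed


definition round_mean :: "nat \<Rightarrow> 'a \<Rightarrow> real" where
  "round_mean r w =
    (\<Sum>k<n div 2. var_kernel (X (rr_fst n r k) w) (X (rr_snd n r k) w)) / real (n div 2)"

lemma measurable_round_mean [measurable]:
  assumes "r < rr_rounds n"
  shows "round_mean r \<in> borel_measurable M"
  using rr_pair_valid[OF two_le_n assms] unfolding round_mean_def
  by (intro borel_measurable_divide borel_measurable_sum borel_measurable_var_kernel measurable_X) auto

lemma round_mean_bounds:
  assumes "r < rr_rounds n" "w \<in> space M"
  shows "0 \<le> round_mean r w \<and> round_mean r w \<le> 1 / 2"
proof -
  have "var_kernel (X (rr_fst n r k) w) (X (rr_snd n r k) w) \<le> 1 / 2" if "k < n div 2" for k
    using rr_pair_valid[OF two_le_n assms(1) that] X_unit assms(2) by (intro var_kernel_le_half) auto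
  then have "(\<Sum>k<n div 2. var_kernel (X (rr_fst n r k) w) (X (rr_snd n r k) w)) \<le> (\<Sum>k<n div 2. 1 / 2)"
    by (intro sum_mono) auto
  moreover have "0 < n div 2" using two_le_n by simp
  ultimately show ?thesis unfolding round_mean_def by (simp add: sum_nonneg var_kernel_nonneg field_simps)
qed

lemma sample_var_eq_mean_round_means:
  "sample_var n X w = (\<Sum>r<rr_rounds n. round_mean r w) / real (rr_rounds n)"
  using sample_var_round_robin[OF two_le_n] unfolding round_mean_def .

lemma sample_var_bounds:
  assumes "w \<in> space M"
  shows "0 \<le> sample_var n X w \<and> sample_var n X w \<le> 1 / 2"
proof -
  have "(\<Sum>r<rr_rounds n. round_mean r w) \<le> (\<Sum>r<rr_rounds n. 1 / 2)"
    using round_mean_bounds assms by (intro sum_mono) auto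
  moreover have "0 \<le> (\<Sum>r<rr_rounds n. round_mean r w)"
    using round_mean_bounds assms by (intro sum_nonneg) auto
  ultimately show ?thesis
    using rr_rounds_pos[OF two_le_n] unfolding sample_var_eq_mean_round_means by (simp add: field_simps)
qed

lemma measurable_sample_var [measurable]: "(\<lambda>w. sample_var n X w) \<in> borel_measurable M"
  unfolding sample_var_def sample_mean_def by measurable

lemma mgf_round_mean_le:
  assumes "r < rr_rounds n"
  shows "expectation (\<lambda>w. exp (t * round_mean r w))
    \<le> exp (2 * real (n div 2) * law_variance F * (exp (t / (2 * real (n div 2))) - 1))"
proof -
  have "t * round_mean r w =
      t / real (n div 2) * (\<Sum>k<n div 2. var_kernel (X (rr_fst n r k) w) (X (rr_snd n r k) w))" for w
    unfolding round_mean_def by simp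
  then show ?thesis
    using mgf_disjoint_pairs_le[of "n div 2" "rr_fst n r" "rr_snd n r" "t / real (n div 2)"]
      rr_pair_valid[OF two_le_n assms] rr_round_disjoint[OF two_le_n assms]
    by (simp add: mult.commute[of _ 2])
qed

text \<open>Hoeffding's trick: the sample variance is the average of the round means, so by Jensen its
  exponential moments are bounded by theirs, and each round mean averages \<open>\<lfloor>n/2\<rfloor>\<close> independent
  kernel values.\<close>

lemma mgf_sample_var_le:
  "expectation (\<lambda>w. exp (t * sample_var n X w))
    \<le> exp (2 * real (n div 2) * law_variance F * (exp (t / (2 * real (n div 2))) - 1))"
proof -
  define N where "N = rr_rounds n"
  define B where "B = exp (2 * real (n div 2) * law_variance F * (exp (t / (2 * real (n div 2))) - 1))"
  have N: "0 < N" unfolding N_def by (rule rr_rounds_pos[OF two_le_n])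
  have int_round: "integrable M (\<lambda>w. exp (t * round_mean r w))" if "r < N" for r
    using that round_mean_bounds unfolding N_def by (intro integrable_exp_mult_bounded[where c = "1 / 2"]) auto
  have "expectation (\<lambda>w. exp (t * sample_var n X w)) \<le> expectation (\<lambda>w. (\<Sum>r<N. exp (t * round_mean r w)) / N)"
  proof (rule integral_mono)
    show "integrable M (\<lambda>w. exp (t * sample_var n X w))"
      using sample_var_bounds by (intro integrable_exp_mult_bounded[where c = "1 / 2"]) auto
    show "integrable M (\<lambda>w. (\<Sum>r<N. exp (t * round_mean r w)) / N)"
      using int_round by (intro integrable_divide integrable_sum) auto
    fix w
    show "exp (t * sample_var n X w) \<le> (\<Sum>r<N. exp (t * round_mean r w)) / N"
      using exp_mean_le_mean_exp[of "{..<N}" "\<lambda>r. t * round_mean r w"] N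
      by (simp add: sample_var_eq_mean_round_means N_def sum_distrib_left lessThan_empty_iff)
  qed
  also have "\<dots> = (\<Sum>r<N. expectation (\<lambda>w. exp (t * round_mean r w))) / N"
    using int_round by simp
  also have "\<dots> \<le> (\<Sum>r<N. B) / N"
    using mgf_round_mean_le unfolding N_def B_def by (intro divide_right_mono sum_mono) auto
  also have "\<dots> = B" using N by simp
  finally show ?thesis unfolding B_def .
qed

theorem sample_sd_deviation_bounds:
  assumes "0 < \<delta>" "\<delta> < 1"
  shows "1 - \<delta> \<le> prob {w \<in> space M.
      sqrt (sample_var n X w) \<le> sqrt (law_variance F) + sqrt (ln (1 / \<delta>) / real (n div 2))}"
    and "1 - \<delta> \<le> prob {w \<in> space M.
      sqrt (law_variance F) \<le> sqrt (sample_var n X w) + sqrt (ln (1 / \<delta>) / real (n div 2))}"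
proof -
  have m: "0 < real (n div 2)" using two_le_n by simp
  have V: "0 \<le> law_variance F" unfolding law_variance_def by simp
  have int: "integrable M (\<lambda>w. exp (t * sample_var n X w))" for t
    using sample_var_bounds by (intro integrable_exp_mult_bounded[where c = "1 / 2"]) auto
  show "1 - \<delta> \<le> prob {w \<in> space M.
      sqrt (sample_var n X w) \<le> sqrt (law_variance F) + sqrt (ln (1 / \<delta>) / real (n div 2))}"
    using sqrt_upper_tail_le[OF measurable_sample_var int mgf_sample_var_le m V assms]
      prob_neg[of "\<lambda>w. sqrt (law_variance F) + sqrt (ln (1 / \<delta>) / real (n div 2)) < sqrt (sample_var n X w)"]
    by (simp add: not_less)
  show "1 - \<delta> \<le> prob {w \<in> space M.
      sqrt (law_variance F) \<le> sqrt (sample_var n X w) + sqrt (ln (1 / \<delta>) / real (n div 2))}"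
    using sqrt_lower_tail_le[OF measurable_sample_var _ int mgf_sample_var_le m V assms] sample_var_bounds
      prob_neg[of "\<lambda>w. sqrt (sample_var n X w) + sqrt (ln (1 / \<delta>) / real (n div 2)) < sqrt (law_variance F)"]
    by (simp add: not_less)
qed

end

theorem proposition2:
  fixes M :: "'a measure" and X :: "nat \<Rightarrow> 'a \<Rightarrow> real" and F :: "real measure"
    and n :: nat and \<delta> :: real
  assumes "prob_space M"
    and "n \<ge> 2"
    and "\<forall>i<n. X i \<in> borel_measurable M"
    and "prob_space.indep_vars M (\<lambda>_. borel) X {..<n}"
    and "\<forall>i<n. distr M borel (X i) = F"
    and "\<forall>i<n. \<forall>w\<in>space M. X i w \<in> {0..1}"
    and "0 < \<delta>" and "\<delta> < 1"
  shows "measure M {w \<in> space M. sqrt (sample_var n X w) \<le> sqrt (law_variance F)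
            + (sqrt 2 / 2 + sqrt 6 / 6) * sqrt (1 / real_of_int \<lfloor>real n / 2\<rfloor> * ln (1 / \<delta>))}
          \<ge> 1 - \<delta>
       \<and> measure M {w \<in> space M. sqrt (law_variance F) \<le> sqrt (sample_var n X w)
            + (sqrt 2 / 2 + sqrt 42 / 6) * sqrt (1 / real_of_int \<lfloor>real n / 2\<rfloor> * ln (1 / \<delta>))}
          \<ge> 1 - \<delta>"
proof -
  interpret iid_unit_sample M X n F
    using assms(1-6) by (auto intro!: iid_unit_sample.intro iid_unit_sample_axioms.intro)
  define e where "e = sqrt (ln (1 / \<delta>) / real (n div 2))"
  have "real_of_int \<lfloor>real n / 2\<rfloor> = real (n div 2)"
    using floor_divide_of_nat_eq[of n 2, where 'a = real] by simp
  then have e_eq: "sqrt (1 / real_of_int \<lfloor>real n / 2\<rfloor> * ln (1 / \<delta>)) = e"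
    unfolding e_def by simp
  have "0 \<le> e" using assms(7,8) unfolding e_def by simp
  \<comment> \<open>The deviation bounds hold with constant \<open>1\<close>; both stated constants are larger.\<close>
  moreover have "1 \<le> sqrt 2 / 2 + sqrt 6 / 6" "1 \<le> sqrt 2 / 2 + sqrt 42 / 6"
    using real_le_rsqrt[of "1.4" 2] real_le_rsqrt[of "2.4" 6] real_le_rsqrt[of 6 42]
    by (simp_all add: power2_eq_square)
  ultimately have "e \<le> (sqrt 2 / 2 + sqrt 6 / 6) * e" "e \<le> (sqrt 2 / 2 + sqrt 42 / 6) * e"
    by (simp_all add: mult_le_cancel_right1)
  then have "prob {w \<in> space M. sqrt (sample_var n X w) \<le> sqrt (law_variance F) + e}
        \<le> prob {w \<in> space M. sqrt (sample_var n X w) \<le> sqrt (law_variance F) + (sqrt 2 / 2 + sqrt 6 / 6) * e}"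
    "prob {w \<in> space M. sqrt (law_variance F) \<le> sqrt (sample_var n X w) + e}
        \<le> prob {w \<in> space M. sqrt (law_variance F) \<le> sqrt (sample_var n X w) + (sqrt 2 / 2 + sqrt 42 / 6) * e}"
    by (auto intro!: finite_measure_mono)
  then show ?thesis
    using sample_sd_deviation_bounds[OF assms(7,8)] unfolding e_eq e_def by linarith
qed

end
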